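(* Consider the discrete-time linear system $x_{t+1}=Ax_t+Bu_t$, $t=0,\dots,T-1$, with $x_t\in\mathbb{R}^n$, $u_t\in\mathbb{R}^m$, finite horizon $T\in\mathbb{N}$, and random initial state $x_0\sim p_0$. Let $Q,Q_F\in\mathbb{R}^{n\times n}$ and $R\in\mathbb{R}^{m\times m}$ be symmetric positive definite, and let $\psi,\psi_F:\mathbb{R}^n\to\mathbb{R}$ be continuously differentiable, bounded from below, with $\psi(0)=\psi_F(0)=0$. Let $\mathcal{H}$ be a Hilbert space of measurable functions $\mathbb{R}^n\to\mathbb{R}^m$ with inner product $\langle\cdot,\cdot\rangle_{\mathcal H}$ and norm $\|\cdot\|_{\mathcal H}$. For a policy sequence $\pi_{0:T-1}=\{\pi_0,\dots,\pi_{T-1}\}$, $\pi_t\in\mathcal H$, with closed-loop inputs $u_t=\pi_t(x_t)$, define $V_T(x)=x^\top Q_Fx+\psi_F(x)$ and, for $t=T-1,\dots,0$, $$V_t(x)=x^\top Qx+\pi_t(x)^\top R\pi_t(x)+\psi(x)+V_{t+1}(Ax+B\pi_t(x)),$$ and the stage functional $$\tilde J_t(\pi_{t:T-1})=\mathbb{E}\big[x_t^\top Qx_t+\pi_t(x_t)^\top R\pi_t(x_t)+\psi(x_t)+V_{t+1}(Ax_t+B\pi_t(x_t))\big],$$ where the expectation is over the closed-loop state $x_t$ generated from $x_0\sim p_0$. For each $t$ and each fixed tail $\pi_{t+1:T-1}$, let $\overline{D\tilde J_t}(\cdot,\cdot,\pi_{t+1:T-1}):\mathcal H\times\mathcal H\to\mathcal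 H$ be a discrete Fréchet derivative of $\phi\mapsto\tilde J_t(\phi,\pi_{t+1:T-1})$, i.e. for all $\phi,\varphi\in\mathcal H$, $$\langle\phi-\varphi,\overline{D\tilde J_t}(\phi,\varphi,\pi_{t+1:T-1})\rangle_{\mathcal H}=\tilde J_t(\phi,\pi_{t+1:T-1})-\tilde J_t(\varphi,\pi_{t+1:T-1}),$$ and $\overline{D\tilde J_t}(\phi,\varphi,\pi_{t+1:T-1})\to D\tilde J_t(\varphi)$ (the Riesz representative of the Fréchet derivative at $\varphi$) as $\|\phi-\varphi\|_{\mathcal H}\to0$. Let $\delta>0$ and let policy sequences $\pi^k_{0:T-1}$, $k=0,1,2,\dots$, be generated by the implicit update, performed backward for $t=T-1,\dots,0$, $$\pi_t^{k+1}=\pi_t^k-\delta\,\overline{D\tilde J_t}\big(\pi_t^{k+1},\pi_t^k,\pi_{t+1:T-1}^{k+1}\big).$$ Then for every iteration $k$ and any $\delta>0$, $$\tilde J_0(\pi^{k+1}_{0:T-1})-\tilde J_0(\pi^k_{0:T-1})=-\frac{1}{\delta}\sum_{t=0}^{T-1}\|\pi_t^{k+1}-\pi_t^k\|_{\mathcal H}^2\le0.$$ Consequently, the sequence $\{\tilde J_0(\pi^k_{0:T-1})\}_{k\ge0}$ is monotonically non-increasing and converges as $k\to\infty$, and $\sum_{t=0}^{T-1}\|\pi_t^{k+1}-\pi_t^k\|_{\mathcal H}^2\to0$.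
   Context: This is a team (multi-agent) control problem: the stacked input $u_t$ collects the inputs of all team members, $B=[B_1\ \cdots\ B_N]$, and the team jointly minimizes the finite-horizon expected cost $\mathbb{E}[\sum_{t=0}^{T-1}(x_t^\top Qx_t+u_t^\top Ru_t+\psi(x_t))+x_T^\top Q_Fx_T+\psi_F(x_T)]$ over state-feedback policies in $\mathcal H$. The notation $\pi_{t:T-1}=(\pi_t,\pi_{t+1:T-1})$ denotes the tail of the policy sequence from time $t$. *)

theory Defs
  imports "HOL-Analysis.Analysis" "HOL-Probability.Probability"
begin

definition quadf :: "real^'n^'n \<Rightarrow> real^'n \<Rightarrow> real" where
  "quadf M x = x \<bullet> (M *v x)"

definition sym_posdef :: "real^'n^'n \<Rightarrow> bool" where
  "sym_posdef M \<longleftrightarrow> transpose M = M \<and> (\<forall>x. x \<noteq> 0 \<longrightarrow> quadf M x > 0)"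

definition C1_fun :: "(real^'n \<Rightarrow> real) \<Rightarrow> bool" where
  "C1_fun f \<longleftrightarrow> (\<exists>f'. (\<forall>x. (f has_derivative blinfun_apply (f' x)) (at x))
                        \<and> continuous_on UNIV f')"

text \<open>Cost-to-go V_t for the policy sequence pol (pol t \<in> H, evaluated via evh),
  horizon T.  For t \<ge> T it is the terminal cost.\<close>
function Vf :: "real^'n^'n \<Rightarrow> real^'m^'n \<Rightarrow> real^'n^'n \<Rightarrow> real^'m^'m \<Rightarrow> real^'n^'n
    \<Rightarrow> (real^'n \<Rightarrow> real) \<Rightarrow> (real^'n \<Rightarrow> real) \<Rightarrow> ('h \<Rightarrow> real^'n \<Rightarrow> real^'m) \<Rightarrow> nat
    \<Rightarrow> (nat \<Rightarrow> 'h) \<Rightarrow> nat \<Rightarrow> real^'n \<Rightarrow> real" where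
  "Vf A B Q R QF psi psiF evh T pol t x =
     (if T \<le> t then quadf QF x + psiF x
      else quadf Q x + quadf R (evh (pol t) x) + psi x
           + Vf A B Q R QF psi psiF evh T pol (Suc t) (A *v x + B *v evh (pol t) x))"
  by auto
termination
  by (relation "Wellfounded.measure (\<lambda>(A, B, Q, R, QF, psi, psiF, evh, T, pol, t, x). T - t)") auto

declare Vf.simps [simp del]

fun cl_state :: "real^'n^'n \<Rightarrow> real^'m^'n \<Rightarrow> ('h \<Rightarrow> real^'n \<Rightarrow> real^'m)
    \<Rightarrow> (nat \<Rightarrow> 'h) \<Rightarrow> nat \<Rightarrow> real^'n \<Rightarrow> real^'n" where
  "cl_state A B evh pol 0 x0 = x0"
| "cl_state A B evh pol (Suc t) x0 =
     (let x = cl_state A B evh pol t x0 in A *v x + B *v evh (pol t) x)"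

text \<open>The state x_t is generated by the prefix pol 0..t-1, the functional acts on pol t
  and the tail pol (t+1)..(T-1).\<close>
definition Jt :: "real^'n^'n \<Rightarrow> real^'m^'n \<Rightarrow> real^'n^'n \<Rightarrow> real^'m^'m \<Rightarrow> real^'n^'n
    \<Rightarrow> (real^'n \<Rightarrow> real) \<Rightarrow> (real^'n \<Rightarrow> real) \<Rightarrow> ('h \<Rightarrow> real^'n \<Rightarrow> real^'m) \<Rightarrow> nat
    \<Rightarrow> (real^'n) measure \<Rightarrow> nat \<Rightarrow> (nat \<Rightarrow> 'h) \<Rightarrow> real" where
  "Jt A B Q R QF psi psiF evh T p0 t pol =
     (\<integral>x0. Vf A B Q R QF psi psiF evh T pol t (cl_state A B evh pol t x0) \<partial>p0)"

end

theory Submission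
  imports Defs
begin

text \<open>Let P t be the hybrid policy sequence that uses the old policies before stage t and the
  new ones from stage t on, so P 0 is the new and P T the old sequence. The cost accrued before
  stage t depends only on the policies before t, hence J 0 (P t) - J 0 (P (t+1)) equals
  J t (P t) - J t (P (t+1)); these two sequences differ only at stage t, where the discrete
  derivative identity combined with the implicit update turns the difference into
  -(1/\<delta>) times the squared step length at stage t. Telescoping over t gives the cost change.
  As the cost is bounded below, the decreasing cost sequence converges and the step lengths
  tend to zero.\<close>

lemma descent_sequence_bounded_below:
  fixes f S :: "nat \<Rightarrow> real"
  assumes \<delta>: "\<delta> > 0" and S_nonneg: "\<And>k. 0 \<le> S k"
    and step: "\<And>k. f (Suc k) - f k = - (1 / \<delta>) * S k"
    and bound: "\<And>k. b \<le> f k"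
  shows "antimono f" "convergent f" "S \<longlonglongrightarrow> 0"
proof -
  have decrease: "f (Suc k) \<le> f k" for k
  proof -
    have "0 \<le> S k / \<delta>"
      using S_nonneg[of k] \<delta> by simp
    then show ?thesis
      using step[of k] by simp
  qed
  then show "antimono f"
    by (rule decseq_SucI)
  then obtain L where L: "f \<longlonglongrightarrow> L"
    using decseq_convergent bound by blast
  then show "convergent f"
    by (rule convergentI)
  have "S = (\<lambda>k. \<delta> * (f k - f (Suc k)))"
    using step \<delta> by (auto simp: field_simps)
  moreover have "(\<lambda>k. \<delta> * (f k - f (Suc k))) \<longlonglongrightarrow> \<delta> * (L - L)"
    by (intro tendsto_intros L LIMSEQ_Suc)
  ultimately show "S \<longlonglongrightarrow> 0"
    by simp
qed

lemma implicit_update_cost_change: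
  fixes J :: "nat \<Rightarrow> (nat \<Rightarrow> 'h::real_inner) \<Rightarrow> real"
    and DJ :: "nat \<Rightarrow> (nat \<Rightarrow> 'h) \<Rightarrow> 'h \<Rightarrow> 'h \<Rightarrow> 'h"
  assumes stage: "\<And>t pol pol'. t \<le> T \<Longrightarrow> \<forall>s<t. pol s = pol' s \<Longrightarrow>
        J 0 pol - J 0 pol' = J t pol - J t pol'"
    and horizon: "\<And>pol pol'. \<forall>s<T. pol s = pol' s \<Longrightarrow> J 0 pol = J 0 pol'"
    and discrete: "\<And>t pol \<phi> \<phi>'. t < T \<Longrightarrow>
        inner (\<phi> - \<phi>') (DJ t pol \<phi> \<phi>') = J t (pol(t := \<phi>)) - J t (pol(t := \<phi>'))"
    and \<delta>: "\<delta> \<noteq> 0"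
    and update: "\<And>t. t < T \<Longrightarrow>
        new t = old t - \<delta> *\<^sub>R DJ t (\<lambda>s. if s < t then old s else new s) (new t) (old t)"
  shows "J 0 new - J 0 old = - (1 / \<delta>) * (\<Sum>t<T. (norm (new t - old t))\<^sup>2)"
proof -
  define P where "P t = (\<lambda>s. if s < t then old s else new s)" for t
  have stage_change: "J 0 (P t) - J 0 (P (Suc t)) = - (1 / \<delta>) * (norm (new t - old t))\<^sup>2"
    if t: "t < T" for t
  proof -
    define d where "d = DJ t (P t) (new t) (old t)"
    have DJ_eq: "d = - (1 / \<delta>) *\<^sub>R (new t - old t)"
      using update[OF t, folded P_def d_def] \<delta> by simp
    have "J 0 (P t) - J 0 (P (Suc t)) = J t (P t) - J t (P (Suc t))"
      using t by (intro stage) (auto simp: P_def)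
    also have "\<dots> = J t ((P t)(t := new t)) - J t ((P t)(t := old t))"
      by (rule arg_cong2[where f = "\<lambda>a b. J t a - J t b"]) (auto simp: P_def)
    also have "\<dots> = inner (new t - old t) d"
      unfolding d_def by (rule discrete[OF t, symmetric])
    also have "\<dots> = - (1 / \<delta>) * (norm (new t - old t))\<^sup>2"
      unfolding DJ_eq by (simp add: power2_norm_eq_inner)
    finally show ?thesis .
  qed
  have "J 0 new - J 0 old = J 0 (P 0) - J 0 (P T)"
    using horizon[of "P T" old] by (simp add: P_def)
  also have "\<dots> = (\<Sum>t<T. J 0 (P t) - J 0 (P (Suc t)))"
    by (rule sum_lessThan_telescope'[symmetric])
  also have "\<dots> = - (1 / \<delta>) * (\<Sum>t<T. (norm (new t - old t))\<^sup>2)"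
    by (simp add: stage_change sum_distrib_left)
  finally show ?thesis .
qed

lemma quadf_nonneg: "sym_posdef M \<Longrightarrow> 0 \<le> quadf M x"
  unfolding sym_posdef_def by (cases "x = 0") (auto simp: quadf_def less_imp_le)

context
  fixes A :: "real^'n^'n" and B :: "real^'m^'n"
    and Q QF :: "real^'n^'n" and R :: "real^'m^'m"
    and psi psiF :: "real^'n \<Rightarrow> real"
    and evh :: "'h \<Rightarrow> real^'n \<Rightarrow> real^'m" and T :: nat
begin

abbreviation cost_to_go :: "(nat \<Rightarrow> 'h) \<Rightarrow> nat \<Rightarrow> real^'n \<Rightarrow> real" where
  "cost_to_go \<equiv> Vf A B Q R QF psi psiF evh T"

lemma cl_state_cong:
  "\<forall>s<t. pol s = pol' s \<Longrightarrow> cl_state A B evh pol t x = cl_state A B evh pol' t x"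
  by (induction t) (auto simp: Let_def)

lemma Vf_Suc: "t < T \<Longrightarrow> cost_to_go pol t x = quadf Q x + quadf R (evh (pol t) x) + psi x
    + cost_to_go pol (Suc t) (A *v x + B *v evh (pol t) x)"
  by (subst Vf.simps) simp

lemma Vf_horizon: "T \<le> t \<Longrightarrow> cost_to_go pol t x = quadf QF x + psiF x"
  by (subst Vf.simps) simp

lemma Vf_closed_loop_diff:
  assumes "t \<le> T" "\<forall>s<t. pol s = pol' s"
  shows "cost_to_go pol 0 x - cost_to_go pol' 0 x
       = cost_to_go pol t (cl_state A B evh pol t x) - cost_to_go pol' t (cl_state A B evh pol' t x)"
  using assms
proof (induction t)
  case 0
  then show ?case by simp
next
  case (Suc t)
  have "pol t = pol' t" and "cl_state A B evh pol t x = cl_state A B evh pol' t x"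
    using Suc.prems by (auto intro: cl_state_cong)
  with Suc show ?case
    by (simp add: Vf_Suc Let_def)
qed

lemma Vf_lower_bound:
  assumes "\<And>x. c \<le> psi x" "\<And>x. cF \<le> psiF x"
    and "\<And>x. 0 \<le> quadf Q x" "\<And>x. 0 \<le> quadf QF x" "\<And>u. 0 \<le> quadf R u"
  shows "real (T - t) * c + cF \<le> cost_to_go pol t x"
proof (induction "T - t" arbitrary: t x)
  case 0
  then show ?case
    using assms(2,4)[of x] by (simp add: Vf_horizon)
next
  case (Suc d)
  then have t: "t < T"
    by simp
  have IH: "real (T - Suc t) * c + cF \<le> cost_to_go pol (Suc t) y" for y
    using Suc.hyps by (intro Suc.hyps(1)) linarith
  have "real (T - t) * c + cF = 0 + 0 + c + (real (T - Suc t) * c + cF)"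
    using t by (simp add: Suc_diff_Suc algebra_simps)
  also have "\<dots> \<le> quadf Q x + quadf R (evh (pol t) x) + psi x
      + cost_to_go pol (Suc t) (A *v x + B *v evh (pol t) x)"
    by (intro add_mono assms IH)
  also have "\<dots> = cost_to_go pol t x"
    by (rule Vf_Suc[OF t, symmetric])
  finally show ?case .
qed

context
  fixes p0 :: "(real^'n) measure"
  assumes integrable_cost_to_go: "\<And>pol t. t \<le> T \<Longrightarrow>
    integrable p0 (\<lambda>x0. cost_to_go pol t (cl_state A B evh pol t x0))"
begin

abbreviation expected_cost :: "nat \<Rightarrow> (nat \<Rightarrow> 'h) \<Rightarrow> real" where
  "expected_cost \<equiv> Jt A B Q R QF psi psiF evh T p0"

lemma Jt_stage_diff:
  assumes "t \<le> T" "\<forall>s<t. pol s = pol' s"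
  shows "expected_cost 0 pol - expected_cost 0 pol'
       = expected_cost t pol - expected_cost t pol'"
proof -
  have "expected_cost 0 pol - expected_cost 0 pol'
      = (\<integral>x0. cost_to_go pol 0 x0 - cost_to_go pol' 0 x0 \<partial>p0)"
    unfolding Jt_def using integrable_cost_to_go[of 0] by simp
  also have "\<dots> = (\<integral>x0. cost_to_go pol t (cl_state A B evh pol t x0)
      - cost_to_go pol' t (cl_state A B evh pol' t x0) \<partial>p0)"
    using Vf_closed_loop_diff[OF assms] by simp
  also have "\<dots> = expected_cost t pol - expected_cost t pol'"
    unfolding Jt_def using integrable_cost_to_go[OF assms(1)] by simp
  finally show ?thesis .
qed

lemma Jt_cong_horizon:
  assumes "\<forall>s<T. pol s = pol' s"
  shows "expected_cost 0 pol = expected_cost 0 pol'"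
proof -
  have "expected_cost T pol = expected_cost T pol'"
    unfolding Jt_def using cl_state_cong[OF assms] by (simp add: Vf_horizon)
  then show ?thesis
    using Jt_stage_diff[OF order_refl assms] by simp
qed

lemma Jt_lower_bound:
  assumes "prob_space p0" "t \<le> T"
    and "\<And>x. c \<le> psi x" "\<And>x. cF \<le> psiF x"
    and "\<And>x. 0 \<le> quadf Q x" "\<And>x. 0 \<le> quadf QF x" "\<And>u. 0 \<le> quadf R u"
  shows "real (T - t) * c + cF \<le> expected_cost t pol"
proof -
  interpret prob_space p0 by fact
  have "(\<integral>x0. real (T - t) * c + cF \<partial>p0) \<le> expected_cost t pol"
    unfolding Jt_def using assms(2)
    by (intro integral_mono integrable_cost_to_go Vf_lower_bound[OF assms(3-7)]) auto
  then show ?thesis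
    by (simp add: prob_space)
qed

end

end

theorem theorem1:
  fixes A :: "real^'n^'n" and B :: "real^'m^'n"
    and Q QF :: "real^'n^'n" and R :: "real^'m^'m"
    and psi psiF :: "real^'n \<Rightarrow> real"
    and evh :: "'h::{real_inner, complete_space} \<Rightarrow> real^'n \<Rightarrow> real^'m"
    and T :: nat and p0 :: "(real^'n) measure"
    and DJbar :: "nat \<Rightarrow> (nat \<Rightarrow> 'h) \<Rightarrow> 'h \<Rightarrow> 'h \<Rightarrow> 'h"
    and \<delta> :: real and pis :: "nat \<Rightarrow> nat \<Rightarrow> 'h"
  defines "J \<equiv> Jt A B Q R QF psi psiF evh T p0"
  assumes p0: "prob_space p0" "sets p0 = sets borel"
    and Q: "sym_posdef Q" and QF: "sym_posdef QF" and R: "sym_posdef R"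
    and psi: "C1_fun psi" "bdd_below (range psi)" "psi 0 = 0"
    and psiF: "C1_fun psiF" "bdd_below (range psiF)" "psiF 0 = 0"
    and H_fun: "\<And>a b x. evh (a + b) x = evh a x + evh b x"
      "\<And>c a x. evh (c *\<^sub>R a) x = c *\<^sub>R evh a x" "inj evh" "\<And>h. evh h \<in> borel_measurable borel"
    and integr: "\<And>pol t. t \<le> T \<Longrightarrow>
        integrable p0 (\<lambda>x0. Vf A B Q R QF psi psiF evh T pol t (cl_state A B evh pol t x0))"
    and DJ_discrete: "\<And>t pol \<phi> \<phi>'. t < T \<Longrightarrow>
        inner (\<phi> - \<phi>') (DJbar t pol \<phi> \<phi>') = J t (pol(t := \<phi>)) - J t (pol(t := \<phi>'))"
    and DJ_limit: "\<And>t pol \<phi>'. t < T \<Longrightarrow> \<exists>g.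
        ((\<lambda>\<phi>. J t (pol(t := \<phi>))) has_derivative (\<lambda>h. inner h g)) (at \<phi>')
        \<and> ((\<lambda>\<phi>. DJbar t pol \<phi> \<phi>') \<longlongrightarrow> g) (at \<phi>')"
    and \<delta>: "\<delta> > 0"
    and update: "\<And>k t. t < T \<Longrightarrow>
        pis (Suc k) t = pis k t - \<delta> *\<^sub>R DJbar t (\<lambda>s. if s < t then pis k s else pis (Suc k) s)
                                       (pis (Suc k) t) (pis k t)"
  shows "(\<forall>k. J 0 (pis (Suc k)) - J 0 (pis k)
               = - (1 / \<delta>) * (\<Sum>t<T. (norm (pis (Suc k) t - pis k t))\<^sup>2)
             \<and> - (1 / \<delta>) * (\<Sum>t<T. (norm (pis (Suc k) t - pis k t))\<^sup>2) \<le> 0)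
         \<and> antimono (\<lambda>k. J 0 (pis k))
         \<and> convergent (\<lambda>k. J 0 (pis k))
         \<and> (\<lambda>k. \<Sum>t<T. (norm (pis (Suc k) t - pis k t))\<^sup>2) \<longlonglongrightarrow> 0"
proof -
  \<comment> \<open>Besides integrability, only the lower bounds on psi and psiF, the semidefiniteness of
    Q, QF and R and the exact identity DJ_discrete are used.\<close>
  define S where "S k = (\<Sum>t<T. (norm (pis (Suc k) t - pis k t))\<^sup>2)" for k
  have stage: "J 0 pol - J 0 pol' = J t pol - J t pol'"
    if "t \<le> T" "\<forall>s<t. pol s = pol' s" for t pol pol'
    unfolding J_def using integr that by (rule Jt_stage_diff)
  have horizon: "J 0 pol = J 0 pol'" if "\<forall>s<T. pol s = pol' s" for pol pol'
    unfolding J_def using integr that by (rule Jt_cong_horizon)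
  have step: "J 0 (pis (Suc k)) - J 0 (pis k) = - (1 / \<delta>) * S k" for k
    unfolding S_def using \<delta>
    by (intro implicit_update_cost_change[where DJ = DJbar, OF stage horizon DJ_discrete _ update])
      simp_all
  have S_nonneg: "0 \<le> S k" for k
    unfolding S_def by (intro sum_nonneg) simp
  obtain c cF where c: "\<And>x. c \<le> psi x" and cF: "\<And>x. cF \<le> psiF x"
    using psi(2) psiF(2) unfolding bdd_below_def by blast
  have bound: "real T * c + cF \<le> J 0 pol" for pol
    using Jt_lower_bound[OF integr p0(1) le0 c cF quadf_nonneg[OF Q] quadf_nonneg[OF QF]
        quadf_nonneg[OF R]]
    unfolding J_def by simp
  have "antimono (\<lambda>k. J 0 (pis k))" "convergent (\<lambda>k. J 0 (pis k))" "S \<longlonglongrightarrow> 0"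
    using descent_sequence_bounded_below[where f = "\<lambda>k. J 0 (pis k)", OF \<delta> S_nonneg step bound]
    by auto
  moreover have "- (1 / \<delta>) * S k \<le> 0" for k
    using S_nonneg[of k] \<delta> by simp
  ultimately show ?thesis
    using step unfolding S_def by auto
qed

end
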